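(* Let $\mathbb{D}$ be a domain, and let $\mathbb{D}_1, \mathbb{D}_2 \subseteq \mathbb{D}$ be disjoint. For a data set $D$ write $D_1 = D \cap \mathbb{D}_1$ and $D_2 = D \cap \mathbb{D}_2$. Let $M_1$ be an $f_1$-differentially private mechanism and $M_2$ an $f_2$-differentially private mechanism, where $M_2$ takes as input an auxiliary value $y_1$ (an output of $M_1$) together with a data set, and is $f_2$-differentially private in its data argument for every value of $y_1$. Define the joint mechanism $M(D) := (y_1, M_2(y_1, D_2))$ where $y_1 := M_1(D_1)$. Then $M$ is $\mathrm{lce}\{f_1, f_2\}$-differentially private.
   Context: An attribute is a finite set; a domain is $\mathbb{D} = A_1 \times \cdots \times A_m$ for attributes $A_i$; elements of $\mathbb{D}$ are rows. A data set is an element of $\mathbb{N}^{|\mathbb{D}|}$ (a histogram/multiset of rows); for $\mathbb{D}' \subseteq \mathbb{D}$, $D \cap \mathbb{D}'$ is the data set consisting of the rows of $D$ lying in $\mathbb{D}'$. Two data sets are neighboring ($D \sim D'$) if they differ in a single row. For distributions $P,P'$ on the same space, the trade-off function is $T(P,P')(\alpha) := \inf\{\beta_\phi : \alpha_\phi \le \alpha\}$ over measurable rejection rules $0\le\phi\le 1$, with $\alpha_\phi = \mathbb{E}_P[\phi]$, $\beta_\phi = 1-\mathbb{E}_{P'}[\phi]$; a trade-off function is any function of this form. For a trade-off function $f$, a mechanism $M$ is $f$-differentially private if $T(M(D), M(D')) \ge f$ pointwise on $[0,1]$ for all neighboring $D, D'$ (where $M(D)$ denotes the output distribution). The lower convex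 envelope is $\mathrm{lce}\{f_1,f_2\}(x) := \sup\{f(x) : f \text{ convex}, f \le \min\{f_1,f_2\}\}$. *)

theory Defs
  imports "HOL-Probability.Probability"
begin

text \<open>Data sets over a finite domain of rows 'r: histograms 'r => nat.\<close>
type_synonym 'r dataset = "'r \<Rightarrow> nat"

definition restrict_ds :: "'r dataset \<Rightarrow> 'r set \<Rightarrow> 'r dataset" where
  "restrict_ds D S = (\<lambda>x. if x \<in> S then D x else 0)"

definition neighbors :: "'r dataset \<Rightarrow> 'r dataset \<Rightarrow> bool" where
  "neighbors D D' \<longleftrightarrow> (\<exists>x. D' = D(x := D x + 1) \<or> D = D'(x := D' x + 1))"

definition tradeoff :: "'a measure \<Rightarrow> 'a measure \<Rightarrow> real \<Rightarrow> real" where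
  "tradeoff P P' \<alpha> = Inf {1 - (\<integral>x. \<phi> x \<partial>P') | \<phi>.
      \<phi> \<in> borel_measurable P \<and> (\<forall>x\<in>space P. 0 \<le> \<phi> x \<and> \<phi> x \<le> 1) \<and> (\<integral>x. \<phi> x \<partial>P) \<le> \<alpha>}"

definition is_tradeoff_fun :: "(real \<Rightarrow> real) \<Rightarrow> bool" where
  "is_tradeoff_fun f \<longleftrightarrow> (\<exists>P P' :: real measure. prob_space P \<and> prob_space P' \<and>
      sets P = sets P' \<and> (\<forall>\<alpha>\<in>{0..1}. f \<alpha> = tradeoff P P' \<alpha>))"

definition f_dp :: "(real \<Rightarrow> real) \<Rightarrow> 'b measure \<Rightarrow> ('r dataset \<Rightarrow> 'b measure) \<Rightarrow> bool" where
  "f_dp f Y M \<longleftrightarrow> (\<forall>D. M D \<in> space (prob_algebra Y)) \<and>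
     (\<forall>D D'. neighbors D D' \<longrightarrow> (\<forall>\<alpha>\<in>{0..1}. f \<alpha> \<le> tradeoff (M D) (M D') \<alpha>))"

definition lce :: "(real \<Rightarrow> real) \<Rightarrow> (real \<Rightarrow> real) \<Rightarrow> real \<Rightarrow> real" where
  "lce f1 f2 x = Sup {h x | h. convex_on {0..1} h \<and> (\<forall>t\<in>{0..1}. h t \<le> min (f1 t) (f2 t))}"

definition joint_mech ::
  "'a measure \<Rightarrow> 'b measure \<Rightarrow> ('r dataset \<Rightarrow> 'a measure) \<Rightarrow> ('a \<Rightarrow> 'r dataset \<Rightarrow> 'b measure)
   \<Rightarrow> 'r set \<Rightarrow> 'r set \<Rightarrow> 'r dataset \<Rightarrow> ('a \<times> 'b) measure" where
  "joint_mech Y1 Y2 M1 M2 S1 S2 D =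
     M1 (restrict_ds D S1) \<bind>
       (\<lambda>y. distr (M2 y (restrict_ds D S2)) (Y1 \<Otimes>\<^sub>M Y2) (\<lambda>z. (y, z)))"

end

theory Submission
  imports Defs
begin

text \<open>Let the neighbouring data sets differ in the row x. If x lies in \<open>\<D>\<^sub>1\<close>, it is not in
  \<open>\<D>\<^sub>2\<close>, so the second stage sees the same data on both sides; any test on the joint output
  can then be averaged over the second coordinate into a test on the output of \<open>M\<^sub>1\<close> with the
  same errors, and the joint trade-off is at least \<open>f\<^sub>1\<close>. Otherwise the first stage has the same
  law on both sides, and for each fixed \<open>y\<^sub>1\<close> the section of the test is a test for
  \<open>M\<^sub>2(y\<^sub>1, \<cdot>)\<close>; its errors obey \<open>f\<^sub>2(\<alpha>(y\<^sub>1)) \<le> 1 - \<beta>(y\<^sub>1)\<close>, and Jensen's inequality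
  for the convex, antitone \<open>f\<^sub>2\<close> integrates this to \<open>f\<^sub>2(\<alpha>) \<le> 1 - \<beta>\<close>. Either way the joint
  trade-off is at least \<open>min{f\<^sub>1, f\<^sub>2} \<ge> lce{f\<^sub>1, f\<^sub>2}\<close>.\<close>

definition rejection_rule :: "'a measure \<Rightarrow> ('a \<Rightarrow> real) \<Rightarrow> bool" where
  "rejection_rule P \<phi> \<longleftrightarrow> \<phi> \<in> borel_measurable P \<and> (\<forall>x\<in>space P. 0 \<le> \<phi> x \<and> \<phi> x \<le> 1)"

lemma tradeoff_eq_Inf_rejection_rule:
  "tradeoff P P' \<alpha> = Inf {1 - (\<integral>x. \<phi> x \<partial>P') | \<phi>. rejection_rule P \<phi> \<and> (\<integral>x. \<phi> x \<partial>P) \<le> \<alpha>}"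
  unfolding tradeoff_def rejection_rule_def by simp

lemma rejection_rule_cong_sets: "sets P = sets P' \<Longrightarrow> rejection_rule P \<phi> = rejection_rule P' \<phi>"
  unfolding rejection_rule_def using sets_eq_imp_space_eq measurable_cong_sets by metis

lemma (in prob_space)
  assumes "rejection_rule M \<phi>"
  shows integrable_rejection_rule: "integrable M \<phi>"
    and rejection_rule_integral_nonneg: "0 \<le> (\<integral>x. \<phi> x \<partial>M)"
    and rejection_rule_integral_le_1: "(\<integral>x. \<phi> x \<partial>M) \<le> 1"
proof -
  have \<phi>: "\<phi> \<in> borel_measurable M" "\<And>x. x \<in> space M \<Longrightarrow> 0 \<le> \<phi> x \<and> \<phi> x \<le> 1"
    using assms unfolding rejection_rule_def by auto
  show "integrable M \<phi>"
    using \<phi> by (intro integrable_const_bound[where B=1]) auto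
  then have "(\<integral>x. \<phi> x \<partial>M) \<le> (\<integral>x. 1 \<partial>M)"
    using \<phi> by (intro integral_mono) auto
  then show "(\<integral>x. \<phi> x \<partial>M) \<le> 1"
    by (simp add: prob_space)
  show "0 \<le> (\<integral>x. \<phi> x \<partial>M)"
    using \<phi> by (intro integral_nonneg_AE AE_I2) auto
qed

lemma rejection_rule_const: "0 \<le> c \<Longrightarrow> c \<le> 1 \<Longrightarrow> rejection_rule P (\<lambda>_. c)"
  by (simp add: rejection_rule_def)

lemma tradeoff_greatest:
  assumes "0 \<le> \<alpha>"
    and "\<And>\<phi>. rejection_rule P \<phi> \<Longrightarrow> (\<integral>x. \<phi> x \<partial>P) \<le> \<alpha> \<Longrightarrow> c \<le> 1 - (\<integral>x. \<phi> x \<partial>P')"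
  shows "c \<le> tradeoff P P' \<alpha>"
  unfolding tradeoff_eq_Inf_rejection_rule using assms rejection_rule_const[of 0 P]
  by (intro cInf_greatest) force+

lemma one_minus_le_tradeoff_self: "0 \<le> \<alpha> \<Longrightarrow> 1 - \<alpha> \<le> tradeoff P P \<alpha>"
  by (rule tradeoff_greatest) auto

locale tradeoff_pair =
  P: prob_space P + P': prob_space P' for P P' :: "'a measure" +
  assumes sets_eq: "sets P = sets P'"
begin

abbreviation type_II_errors :: "real \<Rightarrow> real set" where
  "type_II_errors \<alpha> \<equiv> {1 - (\<integral>x. \<phi> x \<partial>P') | \<phi>. rejection_rule P \<phi> \<and> (\<integral>x. \<phi> x \<partial>P) \<le> \<alpha>}"

lemma type_II_errors_nonempty: "0 \<le> \<alpha> \<Longrightarrow> type_II_errors \<alpha> \<noteq> {}"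
  using rejection_rule_const[of 0 P] by force

lemma bdd_below_type_II_errors: "bdd_below (type_II_errors \<alpha>)"
  using P'.rejection_rule_integral_le_1 rejection_rule_cong_sets[OF sets_eq]
  by (intro bdd_belowI[where m=0]) auto

lemma tradeoff_le:
  "rejection_rule P \<phi> \<Longrightarrow> (\<integral>x. \<phi> x \<partial>P) \<le> \<alpha> \<Longrightarrow> tradeoff P P' \<alpha> \<le> 1 - (\<integral>x. \<phi> x \<partial>P')"
  unfolding tradeoff_eq_Inf_rejection_rule by (rule cInf_lower[OF _ bdd_below_type_II_errors]) auto

lemma tradeoff_nonneg: "0 \<le> \<alpha> \<Longrightarrow> 0 \<le> tradeoff P P' \<alpha>"
  using P'.rejection_rule_integral_le_1 rejection_rule_cong_sets[OF sets_eq]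
  by (intro tradeoff_greatest) auto

lemma tradeoff_antimono: "0 \<le> \<alpha> \<Longrightarrow> \<alpha> \<le> \<alpha>' \<Longrightarrow> tradeoff P P' \<alpha>' \<le> tradeoff P P' \<alpha>"
  unfolding tradeoff_eq_Inf_rejection_rule
  by (rule cInf_superset_mono[OF type_II_errors_nonempty bdd_below_type_II_errors]) auto

lemma tradeoff_le_one_minus: "0 \<le> \<alpha> \<Longrightarrow> \<alpha> \<le> 1 \<Longrightarrow> tradeoff P P' \<alpha> \<le> 1 - \<alpha>"
  using tradeoff_le[OF rejection_rule_const, of \<alpha> \<alpha>] by (simp add: P.prob_space P'.prob_space)

lemma tradeoff_approx:
  assumes "0 \<le> \<alpha>" "0 < e"
  obtains \<phi> where "rejection_rule P \<phi>" "(\<integral>x. \<phi> x \<partial>P) \<le> \<alpha>"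
    "1 - (\<integral>x. \<phi> x \<partial>P') < tradeoff P P' \<alpha> + e"
proof -
  have "Inf (type_II_errors \<alpha>) < tradeoff P P' \<alpha> + e"
    using assms unfolding tradeoff_eq_Inf_rejection_rule by simp
  from cInf_lessD[OF type_II_errors_nonempty[OF assms(1)] this] that show ?thesis
    by blast
qed

lemma lower_bound_le_type_II_error:
  assumes "\<And>\<beta>. \<beta> \<in> {0..1} \<Longrightarrow> f \<beta> \<le> tradeoff P P' \<beta>" and "rejection_rule P \<phi>"
  shows "f (\<integral>x. \<phi> x \<partial>P) \<le> 1 - (\<integral>x. \<phi> x \<partial>P')"
proof -
  have "f (\<integral>x. \<phi> x \<partial>P) \<le> tradeoff P P' (\<integral>x. \<phi> x \<partial>P)"
    using assms P.rejection_rule_integral_nonneg P.rejection_rule_integral_le_1 by simp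
  also have "\<dots> \<le> 1 - (\<integral>x. \<phi> x \<partial>P')"
    using assms(2) by (rule tradeoff_le) simp
  finally show ?thesis .
qed

text \<open>Mixing two nearly optimal rejection rules with the weights of the convex combination.\<close>
lemma convex_on_tradeoff: "convex_on {0..} (tradeoff P P')"
proof (rule convex_onI)
  show "convex {0::real..}"
    by (simp add: convex_real_interval)
  fix t a1 a2 :: real
  assume t: "0 < t" "t < 1" and a: "a1 \<in> {0..}" "a2 \<in> {0..}"
  show "tradeoff P P' ((1 - t) *\<^sub>R a1 + t *\<^sub>R a2) \<le> (1 - t) * tradeoff P P' a1 + t * tradeoff P P' a2"
  proof (rule field_le_epsilon)
    fix e :: real
    assume e: "0 < e"
    obtain \<phi>1 where \<phi>1: "rejection_rule P \<phi>1" "(\<integral>x. \<phi>1 x \<partial>P) \<le> a1"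
      "1 - (\<integral>x. \<phi>1 x \<partial>P') < tradeoff P P' a1 + e"
      using tradeoff_approx[of a1 e] a e by auto
    obtain \<phi>2 where \<phi>2: "rejection_rule P \<phi>2" "(\<integral>x. \<phi>2 x \<partial>P) \<le> a2"
      "1 - (\<integral>x. \<phi>2 x \<partial>P') < tradeoff P P' a2 + e"
      using tradeoff_approx[of a2 e] a e by auto
    define \<phi> where "\<phi> x = (1 - t) * \<phi>1 x + t * \<phi>2 x" for x
    have "rejection_rule P \<phi>"
      using \<phi>1(1) \<phi>2(1) t unfolding rejection_rule_def \<phi>_def
      by (auto simp: convex_bound_le)
    moreover have "(\<integral>x. \<phi> x \<partial>P) \<le> (1 - t) *\<^sub>R a1 + t *\<^sub>R a2"
      using \<phi>1 \<phi>2 t unfolding \<phi>_def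
      by (simp add: P.integrable_rejection_rule add_mono mult_left_mono)
    ultimately have "tradeoff P P' ((1 - t) *\<^sub>R a1 + t *\<^sub>R a2) \<le> 1 - (\<integral>x. \<phi> x \<partial>P')"
      by (rule tradeoff_le)
    also have "\<dots> = (1 - t) * (1 - (\<integral>x. \<phi>1 x \<partial>P')) + t * (1 - (\<integral>x. \<phi>2 x \<partial>P'))"
      using \<phi>1(1) \<phi>2(1) unfolding \<phi>_def rejection_rule_cong_sets[OF sets_eq]
      by (simp add: P'.integrable_rejection_rule algebra_simps)
    also have "\<dots> \<le> (1 - t) * (tradeoff P P' a1 + e) + t * (tradeoff P P' a2 + e)"
      using \<phi>1 \<phi>2 t by (intro add_mono mult_left_mono) auto
    finally show "tradeoff P P' ((1 - t) *\<^sub>R a1 + t *\<^sub>R a2)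
        \<le> (1 - t) * tradeoff P P' a1 + t * tradeoff P P' a2 + e"
      by (simp add: algebra_simps)
  qed
qed

end

lemma tradeoff_pair_prob_algebra:
  "P \<in> space (prob_algebra Y) \<Longrightarrow> P' \<in> space (prob_algebra Y) \<Longrightarrow> tradeoff_pair P P'"
  by (auto simp: space_prob_algebra intro!: tradeoff_pair.intro tradeoff_pair_axioms.intro)

lemma
  assumes "is_tradeoff_fun f"
  shows convex_on_tradeoff_fun: "convex_on {0..1} f"
    and tradeoff_fun_antimono: "antimono_on {0..1} f"
    and tradeoff_fun_nonneg: "\<alpha> \<in> {0..1} \<Longrightarrow> 0 \<le> f \<alpha>"
    and tradeoff_fun_le_one_minus: "\<alpha> \<in> {0..1} \<Longrightarrow> f \<alpha> \<le> 1 - \<alpha>"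
proof -
  obtain P P' :: "real measure" where "prob_space P" "prob_space P'" "sets P = sets P'"
    and f_eq: "\<forall>\<alpha>\<in>{0..1}. f \<alpha> = tradeoff P P' \<alpha>"
    using assms unfolding is_tradeoff_fun_def by blast
  then interpret tradeoff_pair P P'
    by (intro tradeoff_pair.intro tradeoff_pair_axioms.intro)
  have f: "f \<alpha> = tradeoff P P' \<alpha>" if "\<alpha> \<in> {0..1}" for \<alpha>
    using f_eq that by blast
  have "convex_on {0..1} (tradeoff P P')"
    by (rule convex_on_subset[OF convex_on_tradeoff]) (auto simp: convex_real_interval)
  show "convex_on {0..1} f"
  proof (rule convex_onI)
    fix t x y :: real
    assume "0 < t" "t < 1" "x \<in> {0..1}" "y \<in> {0..1}"
    moreover have "(1 - t) *\<^sub>R x + t *\<^sub>R y \<in> {0..1}"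
      using calculation by (intro convexD) (auto simp: convex_real_interval)
    ultimately show "f ((1 - t) *\<^sub>R x + t *\<^sub>R y) \<le> (1 - t) * f x + t * f y"
      using convex_onD[OF \<open>convex_on {0..1} (tradeoff P P')\<close>, of t x y] by (simp add: f)
  qed (simp add: convex_real_interval)
  show "antimono_on {0..1} f"
    by (intro monotone_onI) (simp add: f tradeoff_antimono)
  show "\<alpha> \<in> {0..1} \<Longrightarrow> 0 \<le> f \<alpha>"
    by (simp add: f tradeoff_nonneg)
  show "\<alpha> \<in> {0..1} \<Longrightarrow> f \<alpha> \<le> 1 - \<alpha>"
    by (simp add: f tradeoff_le_one_minus)
qed

lemma lce_le_min:
  assumes "\<And>t. t \<in> {0..1} \<Longrightarrow> 0 \<le> f1 t" "\<And>t. t \<in> {0..1} \<Longrightarrow> 0 \<le> f2 t" "a \<in> {0..1}"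
  shows "lce f1 f2 a \<le> min (f1 a) (f2 a)"
  unfolding lce_def
proof (rule cSup_least)
  have "convex_on {0..1} (\<lambda>_::real. 0::real)"
    by (simp add: convex_on_const convex_real_interval)
  moreover have "\<forall>t\<in>{0..1}. (\<lambda>_. 0) t \<le> min (f1 t) (f2 t)"
    using assms(1,2) by simp
  ultimately show "{h a |h. convex_on {0..1} h \<and> (\<forall>t\<in>{0..1}. h t \<le> min (f1 t) (f2 t))} \<noteq> {}"
    by blast
qed (use assms(3) in auto)

text \<open>A convex function on a closed interval need not have a supporting line at an endpoint,
  but there the rejection rule is almost surely constant.\<close>
lemma (in prob_space) jensens_inequality_unit_interval:
  fixes f :: "real \<Rightarrow> real"
  assumes \<psi>: "rejection_rule M \<psi>" and g: "integrable M g"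
    and le: "\<And>y. y \<in> space M \<Longrightarrow> f (\<psi> y) \<le> g y" and f: "convex_on {0..1} f"
  shows "f (\<integral>y. \<psi> y \<partial>M) \<le> (\<integral>y. g y \<partial>M)"
proof -
  define a where "a = (\<integral>y. \<psi> y \<partial>M)"
  have \<psi>_bounds: "0 \<le> \<psi> y" "\<psi> y \<le> 1" if "y \<in> space M" for y
    using \<psi> that unfolding rejection_rule_def by auto
  have \<psi>_int: "integrable M \<psi>"
    using \<psi> by (rule integrable_rejection_rule)
  have endpoint: "f a \<le> (\<integral>y. g y \<partial>M)" if "AE y in M. \<psi> y = a"
  proof -
    from that AE_space have "AE y in M. f a \<le> g y"
      by eventually_elim (use le in auto)
    then have "(\<integral>y. f a \<partial>M) \<le> (\<integral>y. g y \<partial>M)"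
      by (intro integral_mono_AE g) auto
    then show ?thesis
      by (simp add: prob_space)
  qed
  consider "a = 0" | "a = 1" | "0 < a" "a < 1"
    using rejection_rule_integral_nonneg[OF \<psi>] rejection_rule_integral_le_1[OF \<psi>]
    unfolding a_def by linarith
  then have "f a \<le> (\<integral>y. g y \<partial>M)"
  proof cases
    case 1
    then have "AE y in M. \<psi> y = a"
      using integral_nonneg_eq_0_iff_AE[OF \<psi>_int] \<psi>_bounds unfolding a_def by (auto intro: AE_I2)
    then show ?thesis
      by (rule endpoint)
  next
    case 2
    have "(\<integral>y. 1 - \<psi> y \<partial>M) = 0"
      using 2 \<psi>_int unfolding a_def by (simp add: prob_space)
    moreover have "integrable M (\<lambda>y. 1 - \<psi> y)" "AE y in M. 0 \<le> 1 - \<psi> y"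
      using \<psi>_int \<psi>_bounds by (auto intro: AE_I2)
    ultimately have "AE y in M. 1 - \<psi> y = 0"
      using integral_nonneg_eq_0_iff_AE by blast
    then have "AE y in M. \<psi> y = a"
      using 2 by auto
    then show ?thesis
      by (rule endpoint)
  next
    case 3
    define c where "c = Inf ((\<lambda>t. (f a - f t) / (a - t)) ` ({a<..} \<inter> {0..1}))"
    have support: "f a + c * (t - a) \<le> f t" if "t \<in> {0..1}" for t
      unfolding c_def using convex_le_Inf_differential[OF f _ that, of a] 3
      by (simp add: interior_atLeastAtMost_real)
    have "f a = (\<integral>y. f a + c * (\<psi> y - a) \<partial>M)"
      using \<psi>_int unfolding a_def by (simp add: prob_space)
    also have "\<dots> \<le> (\<integral>y. g y \<partial>M)"
    proof (intro integral_mono g)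
      show "integrable M (\<lambda>y. f a + c * (\<psi> y - a))"
        using \<psi>_int by simp
      fix y
      assume "y \<in> space M"
      then show "f a + c * (\<psi> y - a) \<le> g y"
        using support[of "\<psi> y"] \<psi>_bounds[of y] le[of y] by simp
    qed
    finally show ?thesis .
  qed
  then show ?thesis
    by (simp add: a_def)
qed

lemma neighbors_restrict_ds:
  assumes "neighbors D D'"
  obtains x where "\<And>S. x \<notin> S \<Longrightarrow> restrict_ds D S = restrict_ds D' S"
    and "\<And>S. x \<in> S \<Longrightarrow> neighbors (restrict_ds D S) (restrict_ds D' S)"
proof -
  obtain x where x: "D' = D(x := D x + 1) \<or> D = D'(x := D' x + 1)"
    using assms unfolding neighbors_def by blast
  show ?thesis
  proof (rule that[of x])
    fix S
    assume "x \<notin> S"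
    then show "restrict_ds D S = restrict_ds D' S"
      using x unfolding restrict_ds_def by (auto simp: fun_eq_iff)
  next
    fix S
    assume "x \<in> S"
    then show "neighbors (restrict_ds D S) (restrict_ds D' S)"
      using x unfolding restrict_ds_def neighbors_def by (intro exI[of _ x]) (auto simp: fun_eq_iff)
  qed
qed

lemma f_dp_le_tradeoff:
  assumes "f_dp f Y M" "is_tradeoff_fun f" "D = D' \<or> neighbors D D'" "\<alpha> \<in> {0..1}"
  shows "f \<alpha> \<le> tradeoff (M D) (M D') \<alpha>"
proof (cases "D = D'")
  case True
  then show ?thesis
    using tradeoff_fun_le_one_minus[OF assms(2,4)] one_minus_le_tradeoff_self[of \<alpha> "M D"] assms(4)
    by simp
next
  case False
  then show ?thesis
    using assms(1,3,4) unfolding f_dp_def by blast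
qed

definition pair_kernel :: "'a measure \<Rightarrow> 'b measure \<Rightarrow> ('a \<Rightarrow> 'b measure) \<Rightarrow> 'a \<Rightarrow> ('a \<times> 'b) measure"
  where "pair_kernel Y1 Y2 Q y = distr (Q y) (Y1 \<Otimes>\<^sub>M Y2) (Pair y)"

lemma joint_mech_eq_bind_pair_kernel:
  "joint_mech Y1 Y2 M1 M2 S1 S2 D =
     M1 (restrict_ds D S1) \<bind> pair_kernel Y1 Y2 (\<lambda>y. M2 y (restrict_ds D S2))"
  unfolding joint_mech_def pair_kernel_def ..

lemma measurable_pair_kernel:
  "Q \<in> Y1 \<rightarrow>\<^sub>M prob_algebra Y2 \<Longrightarrow> pair_kernel Y1 Y2 Q \<in> Y1 \<rightarrow>\<^sub>M prob_algebra (Y1 \<Otimes>\<^sub>M Y2)"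
  unfolding pair_kernel_def by (erule measurable_distr_prob_space2) simp

lemma prob_algebra_bind_pair_kernel:
  assumes "P \<in> space (prob_algebra Y1)" "Q \<in> Y1 \<rightarrow>\<^sub>M prob_algebra Y2"
  shows "P \<bind> pair_kernel Y1 Y2 Q \<in> space (prob_algebra (Y1 \<Otimes>\<^sub>M Y2))"
  using prob_space_bind'[OF assms(1) measurable_pair_kernel[OF assms(2)]]
    sets_bind'[OF assms(1) measurable_pair_kernel[OF assms(2)]]
  by (simp add: space_prob_algebra)

lemma sets_bind_pair_kernel:
  "P \<in> space (prob_algebra Y1) \<Longrightarrow> Q \<in> Y1 \<rightarrow>\<^sub>M prob_algebra Y2 \<Longrightarrow>
    sets (P \<bind> pair_kernel Y1 Y2 Q) = sets (Y1 \<Otimes>\<^sub>M Y2)"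
  by (drule (1) prob_algebra_bind_pair_kernel) (simp add: space_prob_algebra)

lemma integral_pair_kernel:
  fixes \<phi> :: "'a \<times> 'b \<Rightarrow> real"
  assumes Q: "Q \<in> Y1 \<rightarrow>\<^sub>M prob_algebra Y2" and \<phi>: "\<phi> \<in> borel_measurable (Y1 \<Otimes>\<^sub>M Y2)"
    and y: "y \<in> space Y1"
  shows "(\<integral>x. \<phi> x \<partial>pair_kernel Y1 Y2 Q y) = (\<integral>z. \<phi> (y, z) \<partial>Q y)"
proof -
  have "sets (Q y) = sets Y2"
    using measurable_space[OF Q y] by (simp add: space_prob_algebra)
  then have "Pair y \<in> Q y \<rightarrow>\<^sub>M Y1 \<Otimes>\<^sub>M Y2"
    using y by (simp cong: measurable_cong_sets)
  from integral_distr[OF this \<phi>] show ?thesis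
    unfolding pair_kernel_def by simp
qed

lemma borel_measurable_integral_section:
  fixes \<phi> :: "'a \<times> 'b \<Rightarrow> real"
  assumes Q: "Q \<in> Y1 \<rightarrow>\<^sub>M prob_algebra Y2" and \<phi>: "\<phi> \<in> borel_measurable (Y1 \<Otimes>\<^sub>M Y2)"
  shows "(\<lambda>y. \<integral>z. \<phi> (y, z) \<partial>Q y) \<in> borel_measurable Y1"
proof -
  have "(\<lambda>y. \<integral>x. \<phi> x \<partial>pair_kernel Y1 Y2 Q y) \<in> borel_measurable Y1"
    by (rule measurable_compose[OF measurable_prob_algebraD[OF measurable_pair_kernel[OF Q]]
          integral_measurable_subprob_algebra[OF \<phi>]])
  then show ?thesis
    by (rule measurable_cong[THEN iffD1, rotated]) (simp add: integral_pair_kernel[OF Q \<phi>])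
qed

lemma integral_bind_pair_kernel:
  fixes \<phi> :: "'a \<times> 'b \<Rightarrow> real"
  assumes P: "P \<in> space (prob_algebra Y1)" and Q: "Q \<in> Y1 \<rightarrow>\<^sub>M prob_algebra Y2"
    and \<phi>: "\<phi> \<in> borel_measurable (Y1 \<Otimes>\<^sub>M Y2)" "\<And>x. x \<in> space (Y1 \<Otimes>\<^sub>M Y2) \<Longrightarrow> \<bar>\<phi> x\<bar> \<le> B"
  shows "(\<integral>x. \<phi> x \<partial>(P \<bind> pair_kernel Y1 Y2 Q)) = (\<integral>y. \<integral>z. \<phi> (y, z) \<partial>Q y \<partial>P)"
proof -
  have P_sets: "sets P = sets Y1" and "prob_space P"
    using P by (auto simp: space_prob_algebra)
  note K = measurable_pair_kernel[OF Q]
  have "(\<integral>x. \<phi> x \<partial>(P \<bind> pair_kernel Y1 Y2 Q)) = (\<integral>y. \<integral>x. \<phi> x \<partial>pair_kernel Y1 Y2 Q y \<partial>P)"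
  proof (rule integral_bind[OF \<phi>])
    show "pair_kernel Y1 Y2 Q \<in> P \<rightarrow>\<^sub>M subprob_algebra (Y1 \<Otimes>\<^sub>M Y2)"
      using measurable_prob_algebraD[OF K] P_sets by (simp cong: measurable_cong_sets)
    show "finite_measure P"
      using \<open>prob_space P\<close> by (rule prob_space.finite_measure)
    show "AE y in P. emeasure (pair_kernel Y1 Y2 Q y) (space (pair_kernel Y1 Y2 Q y)) \<le> ennreal 1"
      using measurable_space[OF K] sets_eq_imp_space_eq[OF P_sets]
      by (intro AE_I2) (auto simp: space_prob_algebra prob_space.emeasure_space_1)
  qed
  also have "\<dots> = (\<integral>y. \<integral>z. \<phi> (y, z) \<partial>Q y \<partial>P)"
    using integral_pair_kernel[OF Q \<phi>(1)] sets_eq_imp_space_eq[OF P_sets]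
    by (intro Bochner_Integration.integral_cong) auto
  finally show ?thesis .
qed

lemma integral_bind_pair_kernel_rejection_rule:
  assumes "P \<in> space (prob_algebra Y1)" "Q \<in> Y1 \<rightarrow>\<^sub>M prob_algebra Y2"
    and "rejection_rule (Y1 \<Otimes>\<^sub>M Y2) \<phi>"
  shows "(\<integral>x. \<phi> x \<partial>(P \<bind> pair_kernel Y1 Y2 Q)) = (\<integral>y. \<integral>z. \<phi> (y, z) \<partial>Q y \<partial>P)"
  using assms(3) unfolding rejection_rule_def
  by (intro integral_bind_pair_kernel[OF assms(1,2), where B=1]) auto

lemma rejection_rule_section:
  assumes \<phi>: "rejection_rule (Y1 \<Otimes>\<^sub>M Y2) \<phi>" and y: "y \<in> space Y1" and Q: "sets Q = sets Y2"
  shows "rejection_rule Q (\<lambda>z. \<phi> (y, z))"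
  unfolding rejection_rule_def
proof
  have "\<phi> \<in> borel_measurable (Y1 \<Otimes>\<^sub>M Y2)"
    using \<phi> unfolding rejection_rule_def by blast
  from measurable_compose[OF measurable_Pair1'[OF y] this]
  have "(\<lambda>z. \<phi> (y, z)) \<in> borel_measurable Y2"
    by simp
  then show "(\<lambda>z. \<phi> (y, z)) \<in> borel_measurable Q"
    using Q by (simp cong: measurable_cong_sets)
  show "\<forall>z\<in>space Q. 0 \<le> \<phi> (y, z) \<and> \<phi> (y, z) \<le> 1"
    using \<phi> y sets_eq_imp_space_eq[OF Q] unfolding rejection_rule_def by (auto simp: space_pair_measure)
qed

lemma rejection_rule_integral_section:
  assumes \<phi>: "rejection_rule (Y1 \<Otimes>\<^sub>M Y2) \<phi>" and Q: "Q \<in> Y1 \<rightarrow>\<^sub>M prob_algebra Y2"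
    and P: "sets P = sets Y1"
  shows "rejection_rule P (\<lambda>y. \<integral>z. \<phi> (y, z) \<partial>Q y)"
  unfolding rejection_rule_def
proof
  show "(\<lambda>y. \<integral>z. \<phi> (y, z) \<partial>Q y) \<in> borel_measurable P"
    using borel_measurable_integral_section[OF Q] \<phi> P
    unfolding rejection_rule_def by (simp cong: measurable_cong_sets)
  show "\<forall>y\<in>space P. 0 \<le> (\<integral>z. \<phi> (y, z) \<partial>Q y) \<and> (\<integral>z. \<phi> (y, z) \<partial>Q y) \<le> 1"
  proof
    fix y
    assume "y \<in> space P"
    then have y: "y \<in> space Y1"
      using sets_eq_imp_space_eq[OF P] by simp
    have Qy: "prob_space (Q y)" "sets (Q y) = sets Y2"
      using measurable_space[OF Q y] by (auto simp: space_prob_algebra)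
    show "0 \<le> (\<integral>z. \<phi> (y, z) \<partial>Q y) \<and> (\<integral>z. \<phi> (y, z) \<partial>Q y) \<le> 1"
      using rejection_rule_section[OF \<phi> y Qy(2)]
        prob_space.rejection_rule_integral_nonneg[OF Qy(1)]
        prob_space.rejection_rule_integral_le_1[OF Qy(1)] by blast
  qed
qed

lemma tradeoff_le_tradeoff_bind_pair_kernel:
  assumes P: "P \<in> space (prob_algebra Y1)" and P': "P' \<in> space (prob_algebra Y1)"
    and Q: "Q \<in> Y1 \<rightarrow>\<^sub>M prob_algebra Y2" and \<alpha>: "0 \<le> \<alpha>"
  shows "tradeoff P P' \<alpha> \<le> tradeoff (P \<bind> pair_kernel Y1 Y2 Q) (P' \<bind> pair_kernel Y1 Y2 Q) \<alpha>"
proof (rule tradeoff_greatest[OF \<alpha>])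
  fix \<phi>
  assume \<phi>: "rejection_rule (P \<bind> pair_kernel Y1 Y2 Q) \<phi>"
    and type_I: "(\<integral>x. \<phi> x \<partial>(P \<bind> pair_kernel Y1 Y2 Q)) \<le> \<alpha>"
  have \<phi>_rule: "rejection_rule (Y1 \<Otimes>\<^sub>M Y2) \<phi>"
    using \<phi> rejection_rule_cong_sets[OF sets_bind_pair_kernel[OF P Q]] by simp
  define \<psi> where "\<psi> y = (\<integral>z. \<phi> (y, z) \<partial>Q y)" for y
  have integral_eq: "(\<integral>x. \<phi> x \<partial>(R \<bind> pair_kernel Y1 Y2 Q)) = (\<integral>y. \<psi> y \<partial>R)"
    if "R \<in> space (prob_algebra Y1)" for R
    unfolding \<psi>_def by (rule integral_bind_pair_kernel_rejection_rule[OF that Q \<phi>_rule])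
  have "rejection_rule P \<psi>"
    using rejection_rule_integral_section[OF \<phi>_rule Q] P
    unfolding \<psi>_def by (simp add: space_prob_algebra)
  with type_I have "tradeoff P P' \<alpha> \<le> 1 - (\<integral>y. \<psi> y \<partial>P')"
    by (intro tradeoff_pair.tradeoff_le[OF tradeoff_pair_prob_algebra[OF P P']])
      (simp_all add: integral_eq[OF P])
  then show "tradeoff P P' \<alpha> \<le> 1 - (\<integral>x. \<phi> x \<partial>(P' \<bind> pair_kernel Y1 Y2 Q))"
    by (simp add: integral_eq[OF P'])
qed

lemma tradeoff_bind_pair_kernel_lower_bound:
  assumes P: "P \<in> space (prob_algebra Y1)"
    and Q: "Q \<in> Y1 \<rightarrow>\<^sub>M prob_algebra Y2" and Q': "Q' \<in> Y1 \<rightarrow>\<^sub>M prob_algebra Y2"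
    and f_convex: "convex_on {0..1} f" and f_antimono: "antimono_on {0..1} f"
    and f_le: "\<And>y \<beta>. y \<in> space Y1 \<Longrightarrow> \<beta> \<in> {0..1} \<Longrightarrow> f \<beta> \<le> tradeoff (Q y) (Q' y) \<beta>"
    and \<alpha>: "\<alpha> \<in> {0..1}"
  shows "f \<alpha> \<le> tradeoff (P \<bind> pair_kernel Y1 Y2 Q) (P \<bind> pair_kernel Y1 Y2 Q') \<alpha>"
proof (rule tradeoff_greatest)
  show "0 \<le> \<alpha>"
    using \<alpha> by simp
  fix \<phi>
  assume \<phi>: "rejection_rule (P \<bind> pair_kernel Y1 Y2 Q) \<phi>"
    and type_I: "(\<integral>x. \<phi> x \<partial>(P \<bind> pair_kernel Y1 Y2 Q)) \<le> \<alpha>"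
  interpret P: prob_space P
    using P by (simp add: space_prob_algebra)
  have "sets P = sets Y1"
    using P by (simp add: space_prob_algebra)
  then have P_space: "space P = space Y1"
    by (rule sets_eq_imp_space_eq)
  have \<phi>_rule: "rejection_rule (Y1 \<Otimes>\<^sub>M Y2) \<phi>"
    using \<phi> rejection_rule_cong_sets[OF sets_bind_pair_kernel[OF P Q]] by simp
  define \<psi> where "\<psi> R y = (\<integral>z. \<phi> (y, z) \<partial>R y)" for R y
  have \<psi>_rule: "rejection_rule P (\<psi> R)" if "R \<in> Y1 \<rightarrow>\<^sub>M prob_algebra Y2" for R
    using rejection_rule_integral_section[OF \<phi>_rule that] P
    unfolding \<psi>_def by (simp add: space_prob_algebra)
  have integral_eq: "(\<integral>x. \<phi> x \<partial>(P \<bind> pair_kernel Y1 Y2 R)) = (\<integral>y. \<psi> R y \<partial>P)"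
    if "R \<in> Y1 \<rightarrow>\<^sub>M prob_algebra Y2" for R
    unfolding \<psi>_def by (rule integral_bind_pair_kernel_rejection_rule[OF P that \<phi>_rule])
  have section_bound: "f (\<psi> Q y) \<le> 1 - \<psi> Q' y" if "y \<in> space P" for y
  proof -
    have y: "y \<in> space Y1"
      using that P_space by simp
    interpret Qy: tradeoff_pair "Q y" "Q' y"
      using measurable_space[OF Q y] measurable_space[OF Q' y] by (rule tradeoff_pair_prob_algebra)
    show ?thesis
      unfolding \<psi>_def using rejection_rule_section[OF \<phi>_rule y] measurable_space[OF Q y] f_le[OF y]
      by (intro Qy.lower_bound_le_type_II_error) (simp_all add: space_prob_algebra)
  qed
  have range: "(\<integral>y. \<psi> Q y \<partial>P) \<in> {0..1}"
    using P.rejection_rule_integral_nonneg[OF \<psi>_rule[OF Q]]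
      P.rejection_rule_integral_le_1[OF \<psi>_rule[OF Q]] by simp
  have integrable: "integrable P (\<psi> Q')"
    by (rule P.integrable_rejection_rule[OF \<psi>_rule[OF Q']])
  have "(\<integral>y. \<psi> Q y \<partial>P) \<le> \<alpha>"
    using type_I unfolding integral_eq[OF Q] .
  from monotone_onD[OF f_antimono range \<alpha> this]
  have "f \<alpha> \<le> f (\<integral>y. \<psi> Q y \<partial>P)"
    by simp
  also have "\<dots> \<le> (\<integral>y. 1 - \<psi> Q' y \<partial>P)"
    using integrable section_bound
    by (intro P.jensens_inequality_unit_interval[OF \<psi>_rule[OF Q] _ _ f_convex]) auto
  also have "\<dots> = 1 - (\<integral>y. \<psi> Q' y \<partial>P)"
    using integrable by (simp add: P.prob_space)
  also have "\<dots> = 1 - (\<integral>x. \<phi> x \<partial>(P \<bind> pair_kernel Y1 Y2 Q'))"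
    unfolding integral_eq[OF Q'] ..
  finally show "f \<alpha> \<le> 1 - (\<integral>x. \<phi> x \<partial>(P \<bind> pair_kernel Y1 Y2 Q'))" .
qed

lemma min_le_tradeoff_joint_mech:
  assumes disjoint: "S1 \<inter> S2 = {}"
    and f1: "is_tradeoff_fun f1" and f2: "is_tradeoff_fun f2"
    and M1_dp: "f_dp f1 Y1 M1"
    and M2: "\<And>D. (\<lambda>y. M2 y D) \<in> Y1 \<rightarrow>\<^sub>M prob_algebra Y2"
    and M2_dp: "\<And>y. y \<in> space Y1 \<Longrightarrow> f_dp f2 Y2 (M2 y)"
    and "neighbors D D'" and \<alpha>: "\<alpha> \<in> {0..1}"
  shows "min (f1 \<alpha>) (f2 \<alpha>)
    \<le> tradeoff (joint_mech Y1 Y2 M1 M2 S1 S2 D) (joint_mech Y1 Y2 M1 M2 S1 S2 D') \<alpha>"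
proof -
  define P where "P E = M1 (restrict_ds E S1)" for E
  define Q where "Q E y = M2 y (restrict_ds E S2)" for E y
  have P: "P E \<in> space (prob_algebra Y1)" for E
    using M1_dp unfolding f_dp_def P_def by blast
  have Q: "Q E \<in> Y1 \<rightarrow>\<^sub>M prob_algebra Y2" for E
    unfolding Q_def by (rule M2)
  obtain x where same: "\<And>S. x \<notin> S \<Longrightarrow> restrict_ds D S = restrict_ds D' S"
    and nb: "\<And>S. x \<in> S \<Longrightarrow> neighbors (restrict_ds D S) (restrict_ds D' S)"
    using neighbors_restrict_ds[OF \<open>neighbors D D'\<close>] by blast
  have "min (f1 \<alpha>) (f2 \<alpha>)
    \<le> tradeoff (P D \<bind> pair_kernel Y1 Y2 (Q D)) (P D' \<bind> pair_kernel Y1 Y2 (Q D')) \<alpha>"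
  proof (cases "x \<in> S1")
    case True
    then have "restrict_ds D S2 = restrict_ds D' S2"
      using same disjoint by blast
    then have "Q D = Q D'"
      unfolding Q_def by simp
    have "f1 \<alpha> \<le> tradeoff (P D) (P D') \<alpha>"
      using f_dp_le_tradeoff[OF M1_dp f1 _ \<alpha>] nb True unfolding P_def by blast
    also have "\<dots> \<le> tradeoff (P D \<bind> pair_kernel Y1 Y2 (Q D)) (P D' \<bind> pair_kernel Y1 Y2 (Q D')) \<alpha>"
      unfolding \<open>Q D = Q D'\<close> using \<alpha> by (intro tradeoff_le_tradeoff_bind_pair_kernel P Q) simp
    finally show ?thesis
      by simp
  next
    case False
    then have "P D = P D'"
      unfolding P_def by (simp add: same)
    have "restrict_ds D S2 = restrict_ds D' S2 \<or> neighbors (restrict_ds D S2) (restrict_ds D' S2)"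
      using same nb by blast
    then have "f2 \<beta> \<le> tradeoff (Q D y) (Q D' y) \<beta>" if "y \<in> space Y1" "\<beta> \<in> {0..1}" for y \<beta>
      unfolding Q_def using f_dp_le_tradeoff[OF M2_dp[OF that(1)] f2 _ that(2)] by blast
    then have "f2 \<alpha> \<le> tradeoff (P D \<bind> pair_kernel Y1 Y2 (Q D)) (P D' \<bind> pair_kernel Y1 Y2 (Q D')) \<alpha>"
      unfolding \<open>P D = P D'\<close>
      by (intro tradeoff_bind_pair_kernel_lower_bound P Q \<alpha>
          convex_on_tradeoff_fun[OF f2] tradeoff_fun_antimono[OF f2])
    then show ?thesis
      by simp
  qed
  then show ?thesis
    unfolding joint_mech_eq_bind_pair_kernel P_def Q_def .
qed

theorem theorem5:
  fixes Y1 :: "'a measure" and Y2 :: "'b measure"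
    and M1 :: "('r::finite) dataset \<Rightarrow> 'a measure"
    and M2 :: "'a \<Rightarrow> 'r dataset \<Rightarrow> 'b measure"
    and S1 S2 :: "'r set" and f1 f2 :: "real \<Rightarrow> real"
  assumes "S1 \<inter> S2 = {}"
    and "is_tradeoff_fun f1" and "is_tradeoff_fun f2"
    and "f_dp f1 Y1 M1"
    and "\<And>D. (\<lambda>y. M2 y D) \<in> measurable Y1 (prob_algebra Y2)"
    and "\<And>y. y \<in> space Y1 \<Longrightarrow> f_dp f2 Y2 (M2 y)"
  shows "f_dp (lce f1 f2) (Y1 \<Otimes>\<^sub>M Y2) (joint_mech Y1 Y2 M1 M2 S1 S2)"
  unfolding f_dp_def
proof (intro conjI allI impI ballI)
  fix D
  have "M1 (restrict_ds D S1) \<in> space (prob_algebra Y1)"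
    using assms(4) unfolding f_dp_def by blast
  then show "joint_mech Y1 Y2 M1 M2 S1 S2 D \<in> space (prob_algebra (Y1 \<Otimes>\<^sub>M Y2))"
    unfolding joint_mech_eq_bind_pair_kernel by (intro prob_algebra_bind_pair_kernel assms(5))
next
  fix D D' :: "'r dataset" and \<alpha> :: real
  assume "neighbors D D'" and \<alpha>: "\<alpha> \<in> {0..1}"
  have "lce f1 f2 \<alpha> \<le> min (f1 \<alpha>) (f2 \<alpha>)"
    using tradeoff_fun_nonneg[OF assms(2)] tradeoff_fun_nonneg[OF assms(3)] \<alpha> by (rule lce_le_min)
  also have "\<dots> \<le> tradeoff (joint_mech Y1 Y2 M1 M2 S1 S2 D) (joint_mech Y1 Y2 M1 M2 S1 S2 D') \<alpha>"
    by (rule min_le_tradeoff_joint_mech[OF assms \<open>neighbors D D'\<close> \<alpha>])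
  finally show "lce f1 f2 \<alpha> \<le> tradeoff (joint_mech Y1 Y2 M1 M2 S1 S2 D) (joint_mech Y1 Y2 M1 M2 S1 S2 D') \<alpha>" .
qed

end
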